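(* In the modal logic $\mathrm{SN}$ (defined in the context): if $\vdash B\leftrightarrow C$ then $\vdash A[p/B]\leftrightarrow A[p/C]$ for every formula $A$ and atom $p$, where $A[p/B]$ denotes the result of substituting $B$ for every occurrence of $p$ in $A$.
   Context: $\mathrm{SN}$ is the logic whose formulas are built from propositional atoms $p$, constants $\top,\bot$ and a propositional constant $t$, using $\neg,\wedge,\vee,\to$ and a unary connective $N$ (which may be applied to any formula and iterated). Its theorems ($\vdash A$) are generated by: all classical tautologies; the axioms (K) $N(A\wedge B)\leftrightarrow NA\vee NB$; (F) $\neg NA\leftrightarrow N\neg A$; (C) $A\to NNA$; (A) $t\to(p\to N\neg p)$ for atoms $p$; (T) $t\leftrightarrow Nt$; and the rules modus ponens and (N): from $A$ infer $N\neg A$. *)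

theory Defs
  imports Main
begin

datatype 'a fm =
    Atom 'a
  | Top
  | Bot
  | TConst
  | Neg "'a fm"
  | Conj "'a fm" "'a fm"
  | Disj "'a fm" "'a fm"
  | Imp "'a fm" "'a fm"
  | NOp "'a fm"

definition Iff :: "'a fm \<Rightarrow> 'a fm \<Rightarrow> 'a fm" where
  "Iff A B = Conj (Imp A B) (Imp B A)"

(* Classical (propositional) evaluation: subformulas that are atoms, t, or of the form N A
   are treated as propositional variables, valued by v. *)
fun peval :: "('a fm \<Rightarrow> bool) \<Rightarrow> 'a fm \<Rightarrow> bool" where
  "peval v (Atom p) = v (Atom p)"
| "peval v Top = True"
| "peval v Bot = False"
| "peval v TConst = v TConst"
| "peval v (Neg A) = (\<not> peval v A)"
| "peval v (Conj A B) = (peval v A \<and> peval v B)"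
| "peval v (Disj A B) = (peval v A \<or> peval v B)"
| "peval v (Imp A B) = (peval v A \<longrightarrow> peval v B)"
| "peval v (NOp A) = v (NOp A)"

definition taut :: "'a fm \<Rightarrow> bool" where
  "taut A = (\<forall>v. peval v A)"

inductive thm_SN :: "'a fm \<Rightarrow> bool" where
  Taut: "taut A \<Longrightarrow> thm_SN A"
| AxK: "thm_SN (Iff (NOp (Conj A B)) (Disj (NOp A) (NOp B)))"
| AxF: "thm_SN (Iff (Neg (NOp A)) (NOp (Neg A)))"
| AxC: "thm_SN (Imp A (NOp (NOp A)))"
| AxA: "thm_SN (Imp TConst (Imp (Atom p) (NOp (Neg (Atom p)))))"
| AxT: "thm_SN (Iff TConst (NOp TConst))"
| MP: "thm_SN (Imp A B) \<Longrightarrow> thm_SN A \<Longrightarrow> thm_SN B"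
| RN: "thm_SN A \<Longrightarrow> thm_SN (NOp (Neg A))"

fun subst :: "'a fm \<Rightarrow> 'a \<Rightarrow> 'a fm \<Rightarrow> 'a fm" where
  "subst (Atom q) p B = (if q = p then B else Atom q)"
| "subst Top p B = Top"
| "subst Bot p B = Bot"
| "subst TConst p B = TConst"
| "subst (Neg A) p B = Neg (subst A p B)"
| "subst (Conj A1 A2) p B = Conj (subst A1 p B) (subst A2 p B)"
| "subst (Disj A1 A2) p B = Disj (subst A1 p B) (subst A2 p B)"
| "subst (Imp A1 A2) p B = Imp (subst A1 p B) (subst A2 p B)"
| "subst (NOp A) p B = NOp (subst A p B)"

end

theory Submission
  imports Defs
begin

(*
  The classical connectives are handled by
  tautological reasoning; the only real work is that N preserves provable equivalence.
  Since rule (N) introduces N-not rather than N, one shows that N is antitone: from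
  |- X --> Y the rule gives |- N~~(X & ~Y), hence |- N(X & ~Y) by (F) twice, which (K)
  splits into NX | N~Y, i.e. NY --> NX by (F).
*)

lemma thm_SN_taut_mono:
  assumes "thm_SN P" and "\<And>v. peval v P \<Longrightarrow> peval v Q"
  shows "thm_SN Q"
  using thm_SN.Taut assms(1) by (rule thm_SN.MP) (simp add: taut_def assms(2))

lemma thm_SN_ConjI:
  assumes "thm_SN P" and "thm_SN Q"
  shows "thm_SN (Conj P Q)"
proof -
  have "thm_SN (Imp P (Imp Q (Conj P Q)))"
    by (rule thm_SN.Taut) (simp add: taut_def)
  then show ?thesis using assms by (blast intro: thm_SN.MP)
qed

lemma thm_SN_taut_mono2:
  assumes "thm_SN P" and "thm_SN Q" and "\<And>v. peval v P \<Longrightarrow> peval v Q \<Longrightarrow> peval v R"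
  shows "thm_SN R"
  using thm_SN_ConjI[OF assms(1,2)] by (rule thm_SN_taut_mono) (simp add: assms(3))

lemma thm_SN_NOp_antimono:
  assumes "thm_SN (Imp X Y)"
  shows "thm_SN (Imp (NOp Y) (NOp X))"
proof -
  define D where "D = Conj X (Neg Y)"
  have "thm_SN (Neg D)"
    using assms by (rule thm_SN_taut_mono) (auto simp: D_def)
  then have "thm_SN (NOp (Neg (Neg D)))"
    by (rule thm_SN.RN)
  then have "thm_SN (Neg (NOp (Neg D)))"
    using thm_SN.AxF[of "Neg D"] by (rule thm_SN_taut_mono2) (auto simp: Iff_def)
  then have "thm_SN (NOp D)"
    using thm_SN.AxF[of D] by (rule thm_SN_taut_mono2) (auto simp: Iff_def)
  then have "thm_SN (Disj (NOp X) (NOp (Neg Y)))"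
    using thm_SN.AxK[of X "Neg Y"] by (rule thm_SN_taut_mono2) (auto simp: Iff_def D_def)
  then show ?thesis
    using thm_SN.AxF[of Y] by (rule thm_SN_taut_mono2) (auto simp: Iff_def)
qed

lemma thm_SN_NOp_cong:
  assumes "thm_SN (Iff X Y)"
  shows "thm_SN (Iff (NOp X) (NOp Y))"
proof -
  have "thm_SN (Imp X Y)" "thm_SN (Imp Y X)"
    using assms by (rule thm_SN_taut_mono, simp add: Iff_def)+
  from this[THEN thm_SN_NOp_antimono] show ?thesis
    by (rule thm_SN_taut_mono2) (auto simp: Iff_def)
qed

lemma thm_SN_Iff_refl: "thm_SN (Iff A A)"
  by (rule thm_SN.Taut) (simp add: taut_def Iff_def)

theorem theorem33:
  fixes A B C :: "'a fm" and p :: 'a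
  assumes "thm_SN (Iff B C)"
  shows "thm_SN (Iff (subst A p B) (subst A p C))"
proof (induction A)
  case (Atom q)
  show ?case using assms by (simp add: thm_SN_Iff_refl)
next
  case (Neg A)
  then show ?case by (rule thm_SN_taut_mono) (auto simp: Iff_def)
next
  case (Conj A1 A2)
  then show ?case by (rule thm_SN_taut_mono2) (auto simp: Iff_def)
next
  case (Disj A1 A2)
  then show ?case by (rule thm_SN_taut_mono2) (auto simp: Iff_def)
next
  case (Imp A1 A2)
  then show ?case by (rule thm_SN_taut_mono2) (auto simp: Iff_def)
next
  case (NOp A)
  then show ?case by (simp add: thm_SN_NOp_cong)
qed (simp_all add: thm_SN_Iff_refl)

end
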